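(* Let $\alpha\in\mathbb{N}$ and let $Q_n(f)=\sum_{j=1}^n w_j f(\xi_j)$ be a quadrature rule with distinct points $\xi_1<\dots<\xi_n$ in $\mathbb{R}$ and arbitrary weights $w_j\in\mathbb{R}$. Let $\delta=\delta(n)\in(0,1]$ be such that no quadrature point $\xi_j$ lies in $(0,\delta)$. Then \[ e^{\mathrm{wor}}(Q_n,\mathscr{H}_\alpha)\geq C_\alpha\delta^{\alpha+1/2}, \] where $C_\alpha>0$ is independent of $\delta$. In particular, if $Q_n$ has no quadrature point in $(0,n^{-r})$ for some $r>0$, then $e^{\mathrm{wor}}(Q_n,\mathscr{H}_\alpha)\geq C_\alpha n^{-r\alpha-r/2}$.
   Context: Let $\rho(x)=\frac{1}{\sqrt{2\pi}}\mathrm{e}^{-x^2/2}$ and $L^2_\rho$ the space of (equivalence classes of) measurable $f:\mathbb{R}\to\mathbb{R}$ with $\|f\|_{L^2_\rho}^2=\int_\mathbb{R}|f(x)|^2\rho(x)\,\mathrm{d}x<\infty$. For $\alpha\in\mathbb{N}$, the weighted Sobolev space $\mathscr{H}_\alpha$ is the set of $f\in L^2_\rho$ having weak derivatives $f^{(\tau)}\in L^2_\rho$ for $\tau=1,\dots,\alpha$, with norm $\|f\|_\alpha=(\sum_{\tau=0}^\alpha\|f^{(\tau)}\|_{L^2_\rho}^2)^{1/2}$; elements are identified with their continuous representatives. Let $I(f)=\int_\mathbb{R}f(x)\rho(x)\,\mathrm{d}x$. For a quadrature rule $Q_n$, the worst-case error is $e^{\mathrm{wor}}(Q_n,\mathscr{H}_\alpha)=\sup_{0\neq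 f\in\mathscr{H}_\alpha}|I(f)-Q_n(f)|/\|f\|_\alpha$. *)

theory Defs
  imports "HOL-Analysis.Analysis"
begin

definition gauss_rho :: "real \<Rightarrow> real" where
  "gauss_rho x = exp (- (x^2) / 2) / sqrt (2 * pi)"

definition L2rho :: "(real \<Rightarrow> real) \<Rightarrow> bool" where
  "L2rho f \<longleftrightarrow> f \<in> borel_measurable borel \<and>
     integrable lborel (\<lambda>x. (f x)^2 * gauss_rho x)"

definition L2rho_norm_sq :: "(real \<Rightarrow> real) \<Rightarrow> real" where
  "L2rho_norm_sq f = (LINT x|lborel. (f x)^2 * gauss_rho x)"

definition test_fun :: "(real \<Rightarrow> real) \<Rightarrow> bool" where
  "test_fun \<phi> \<longleftrightarrow> (\<forall>k x. ((deriv ^^ k) \<phi>) differentiable (at x))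
      \<and> bounded {x. \<phi> x \<noteq> 0}"

definition weak_derivs :: "nat \<Rightarrow> (real \<Rightarrow> real) \<Rightarrow> (nat \<Rightarrow> real \<Rightarrow> real) \<Rightarrow> bool" where
  "weak_derivs \<alpha> f g \<longleftrightarrow> g 0 = f \<and>
     (\<forall>\<tau>\<in>{1..\<alpha>}. \<forall>\<phi>. test_fun \<phi> \<longrightarrow>
        (LINT x|lborel. f x * (deriv ^^ \<tau>) \<phi> x) = (-1)^\<tau> * (LINT x|lborel. g \<tau> x * \<phi> x))"

text \<open>Weighted Sobolev space H_alpha (continuous representatives).\<close>
definition sobH :: "nat \<Rightarrow> (real \<Rightarrow> real) \<Rightarrow> bool" where
  "sobH \<alpha> f \<longleftrightarrow> continuous_on UNIV f \<and>
     (\<exists>g. weak_derivs \<alpha> f g \<and> (\<forall>\<tau>\<le>\<alpha>. L2rho (g \<tau>)))"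

text \<open>Norm of H_alpha (weak derivatives are unique a.e., so this is well defined).\<close>
definition sob_norm :: "nat \<Rightarrow> (real \<Rightarrow> real) \<Rightarrow> real" where
  "sob_norm \<alpha> f = (let g = (SOME g. weak_derivs \<alpha> f g \<and> (\<forall>\<tau>\<le>\<alpha>. L2rho (g \<tau>)))
      in sqrt (\<Sum>\<tau>\<le>\<alpha>. L2rho_norm_sq (g \<tau>)))"

definition gauss_int :: "(real \<Rightarrow> real) \<Rightarrow> real" where
  "gauss_int f = (LINT x|lborel. f x * gauss_rho x)"

text \<open>Quadrature rule with points xi 0, ..., xi (n-1) and weights w.\<close>
definition quad :: "nat \<Rightarrow> (nat \<Rightarrow> real) \<Rightarrow> (nat \<Rightarrow> real) \<Rightarrow> (real \<Rightarrow> real) \<Rightarrow> real" where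
  "quad n w \<xi> f = (\<Sum>j<n. w j * f (\<xi> j))"

definition wce :: "nat \<Rightarrow> nat \<Rightarrow> (nat \<Rightarrow> real) \<Rightarrow> (nat \<Rightarrow> real) \<Rightarrow> ereal" where
  "wce \<alpha> n w \<xi> = (SUP f\<in>{f. sobH \<alpha> f \<and> f \<noteq> (\<lambda>_. 0)}.
      ereal (\<bar>gauss_int f - quad n w \<xi> f\<bar> / sob_norm \<alpha> f))"

end

theory Submission
  imports Defs
begin

text \<open>
  Put a smooth bump b, supported in [0, 1], into the gap: f(x) = b(x/\<delta>). The rule does not
  see f, so Q(f) = 0, whereas I(f) \<ge> c \<delta> because f \<rho> is bounded below on [\<delta>/4, 3\<delta>/4].
  The \<tau>-th derivative of f is \<delta>^(-\<tau>) b^(\<tau>)(x/\<delta>) and lives on an interval of length \<delta>,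
  so the norm of f in H_\<alpha> is at most C \<delta>^(1/2 - \<alpha>). Hence the worst-case error is at least
  I(f) / norm(f) \<ge> c' \<delta>^(\<alpha> + 1/2); the choice \<delta> = n^(-r) gives the second bound.

  The norm of H_\<alpha> is computed from some choice of weak derivatives, so we also need that
  weak derivatives are unique almost everywhere. This is the fundamental lemma of the
  calculus of variations, which we obtain by testing against bumps times polynomials and
  applying the Weierstrass approximation theorem.
\<close>

section \<open>Smooth functions\<close>

definition smooth :: "(real \<Rightarrow> real) \<Rightarrow> bool" where
  "smooth f \<longleftrightarrow> (\<forall>k x. (deriv ^^ k) f differentiable (at x))"

lemma test_fun_iff: "test_fun \<phi> \<longleftrightarrow> smooth \<phi> \<and> bounded {x. \<phi> x \<noteq> 0}"
  unfolding test_fun_def smooth_def ..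

lemma smooth_has_higher_deriv:
  "smooth f \<Longrightarrow> ((deriv ^^ k) f has_real_derivative (deriv ^^ Suc k) f x) (at x)"
  unfolding smooth_def by (simp add: DERIV_deriv_iff_real_differentiable)

lemma smooth_continuous_higher_deriv: "smooth f \<Longrightarrow> continuous_on UNIV ((deriv ^^ k) f)"
  unfolding smooth_def
  by (meson continuous_at_imp_continuous_on differentiable_imp_continuous_within)

lemma smooth_deriv: "smooth f \<Longrightarrow> smooth (deriv f)"
  unfolding smooth_def by (metis funpow_Suc_right o_apply)

lemma smoothI_deriv_closed:
  assumes "f \<in> S" "\<And>u. u \<in> S \<Longrightarrow> \<exists>u'\<in>S. \<forall>x. (u has_real_derivative u' x) (at x)"
  shows "smooth f"
proof -
  have deriv_in_S: "deriv u \<in> S \<and> (\<forall>x. u differentiable (at x))" if u: "u \<in> S" for u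
  proof -
    obtain u' where "u' \<in> S" "\<And>x. (u has_real_derivative u' x) (at x)"
      using assms(2)[OF u] by blast
    moreover from this(2) have "deriv u = u'"
      by (intro ext DERIV_imp_deriv)
    ultimately show ?thesis
      using real_differentiable_def by blast
  qed
  have "(deriv ^^ k) f \<in> S" for k
    by (induction k) (simp_all add: assms(1) deriv_in_S)
  then show ?thesis
    unfolding smooth_def using deriv_in_S by blast
qed

lemma smooth_polynomial: "real_polynomial_function p \<Longrightarrow> smooth p"
  by (rule smoothI_deriv_closed[where S = "Collect real_polynomial_function"])
    (use has_real_derivative_polynomial_function in auto)

inductive_set smooth_product_sums :: "(real \<Rightarrow> real) set" where
  "smooth a \<Longrightarrow> smooth b \<Longrightarrow> (\<lambda>x. a x * b x) \<in> smooth_product_sums"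
| "u \<in> smooth_product_sums \<Longrightarrow> v \<in> smooth_product_sums \<Longrightarrow> (\<lambda>x. u x + v x) \<in> smooth_product_sums"

lemma smooth_product_sums_has_derivative:
  "u \<in> smooth_product_sums \<Longrightarrow>
     \<exists>u'\<in>smooth_product_sums. \<forall>x. (u has_real_derivative u' x) (at x)"
proof (induction rule: smooth_product_sums.induct)
  case (1 a b)
  have "((\<lambda>x. a x * b x) has_real_derivative deriv a x * b x + a x * deriv b x) (at x)" for x
    using DERIV_mult[OF smooth_has_higher_deriv[OF 1(1), of 0]
        smooth_has_higher_deriv[OF 1(2), of 0]]
    by (simp add: algebra_simps)
  moreover have "(\<lambda>x. deriv a x * b x + a x * deriv b x) \<in> smooth_product_sums"
    using 1 by (intro smooth_product_sums.intros smooth_deriv)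
  ultimately show ?case
    by (intro bexI[of _ "\<lambda>x. deriv a x * b x + a x * deriv b x"] allI)
next
  case (2 u v)
  then obtain u' v' where "u' \<in> smooth_product_sums" "v' \<in> smooth_product_sums"
    "\<And>x. (u has_real_derivative u' x) (at x)" "\<And>x. (v has_real_derivative v' x) (at x)"
    by blast
  then show ?case
    by (intro bexI[of _ "\<lambda>x. u' x + v' x"] allI DERIV_add smooth_product_sums.intros)
qed

lemma smooth_mult: "smooth a \<Longrightarrow> smooth b \<Longrightarrow> smooth (\<lambda>x. a x * b x)"
  by (rule smoothI_deriv_closed[where S = smooth_product_sums])
    (auto intro: smooth_product_sums.intros smooth_product_sums_has_derivative)

lemma smooth_has_higher_deriv_affine_comp:
  assumes "smooth u"
  shows "((\<lambda>x. (deriv ^^ k) u (c * x + d)) has_real_derivative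
           c * (deriv ^^ Suc k) u (c * x + d)) (at x)"
proof -
  have "((\<lambda>x. c * x + d) has_real_derivative c) (at x)"
    by (auto intro!: derivative_eq_intros)
  from DERIV_chain2[OF smooth_has_higher_deriv[OF assms] this] show ?thesis
    by (simp add: mult.commute)
qed

lemma higher_deriv_affine_comp:
  assumes "smooth u"
  shows "(deriv ^^ k) (\<lambda>x. u (c * x + d)) = (\<lambda>x. c ^ k * (deriv ^^ k) u (c * x + d))"
proof (induction k)
  case (Suc k)
  have "((\<lambda>x. c ^ k * (deriv ^^ k) u (c * x + d)) has_real_derivative
      c ^ Suc k * (deriv ^^ Suc k) u (c * x + d)) (at x)" for x
    using DERIV_cmult[OF smooth_has_higher_deriv_affine_comp[OF assms], of "c ^ k" k c d x]
    by (simp add: ac_simps)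
  then show ?case
    using Suc DERIV_imp_deriv by (metis (no_types, lifting) funpow.simps(2) o_apply)
qed simp

lemma smooth_affine_comp:
  assumes "smooth u"
  shows "smooth (\<lambda>x. u (c * x + d))"
  unfolding smooth_def higher_deriv_affine_comp[OF assms] real_differentiable_def
  using DERIV_cmult[OF smooth_has_higher_deriv_affine_comp[OF assms]] by blast

lemma higher_deriv_eq_0_outside:
  fixes u :: "real \<Rightarrow> real"
  assumes "\<And>x. x \<notin> {a<..<b} \<Longrightarrow> u x = 0" "x \<notin> {a..b}"
  shows "(deriv ^^ k) u x = 0"
proof -
  have "eventually (\<lambda>y. y \<in> - {a..b}) (nhds x)"
    using assms(2) by (intro eventually_nhds_in_open) auto
  then have "eventually (\<lambda>y. u y = 0) (nhds x)"
    by eventually_elim (use assms(1) in auto)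
  then have "(deriv ^^ k) u x = (deriv ^^ k) (\<lambda>_. 0) x"
    by (rule higher_deriv_cong_ev) simp
  also have "(deriv ^^ k) (\<lambda>_. 0 :: real) = (\<lambda>_. 0)"
    by (induction k) auto
  finally show ?thesis by simp
qed

lemma higher_derivs_bounded_compact_support:
  fixes f :: "real \<Rightarrow> real"
  assumes "smooth f" "\<And>x. x \<notin> {a<..<b} \<Longrightarrow> f x = 0"
  obtains B where "B > 0" "\<And>\<tau> x. \<tau> \<le> n \<Longrightarrow> \<bar>(deriv ^^ \<tau>) f x\<bar> \<le> B"
proof -
  have "\<exists>B. \<forall>x. \<bar>(deriv ^^ \<tau>) f x\<bar> \<le> B" for \<tau>
  proof -
    have "bounded ((deriv ^^ \<tau>) f ` {a..b})"
      using smooth_continuous_higher_deriv[OF assms(1)]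
      by (intro compact_imp_bounded compact_continuous_image) (auto intro: continuous_on_subset)
    then obtain B where "\<And>x. x \<in> {a..b} \<Longrightarrow> \<bar>(deriv ^^ \<tau>) f x\<bar> \<le> B"
      unfolding bounded_iff by force
    then have "\<bar>(deriv ^^ \<tau>) f x\<bar> \<le> max B 0" for x
      using higher_deriv_eq_0_outside[where u = f and k = \<tau> and x = x] assms(2)
      by (cases "x \<in> {a..b}") force+
    then show ?thesis
      by blast
  qed
  then obtain B where B: "\<And>\<tau> x. \<bar>(deriv ^^ \<tau>) f x\<bar> \<le> B \<tau>"
    by metis
  then have B_nonneg: "0 \<le> B \<tau>" for \<tau>
    by (rule order_trans[OF abs_ge_zero])
  show ?thesis
  proof
    show "1 + (\<Sum>\<tau>\<le>n. B \<tau>) > 0"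
      using sum_nonneg[of "{..n}" B] B_nonneg by simp
    show "\<bar>(deriv ^^ \<tau>) f x\<bar> \<le> 1 + (\<Sum>\<tau>\<le>n. B \<tau>)" if "\<tau> \<le> n" for \<tau> x
      using B[of \<tau> x] member_le_sum[of \<tau> "{..n}" B] B_nonneg that by simp
  qed
qed

section \<open>A smooth bump function\<close>

lemma polynomial_times_exp_neg_tendsto_0:
  assumes "real_polynomial_function p"
  shows "((\<lambda>t. p t * exp (- t)) \<longlongrightarrow> 0) at_top"
proof -
  obtain a n where p: "p = (\<lambda>x. \<Sum>i\<le>n. a i * x ^ i)"
    using real_polynomial_function_imp_sum[OF assms] by auto
  have "((\<lambda>t. \<Sum>i\<le>n. a i * (t ^ i / exp t)) \<longlongrightarrow> (\<Sum>i\<le>n. a i * 0)) at_top"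
    by (intro tendsto_sum tendsto_mult tendsto_const tendsto_power_div_exp_0)
  then show ?thesis
    by (simp add: p exp_minus divide_inverse sum_distrib_right mult.assoc)
qed

definition flat_exp :: "real \<Rightarrow> real" where
  "flat_exp x = (if 0 < x then exp (- 1 / x) else 0)"

lemma flat_exp_pos: "0 < x \<Longrightarrow> 0 < flat_exp x"
  and flat_exp_eq_0: "x \<le> 0 \<Longrightarrow> flat_exp x = 0"
  and flat_exp_bounds: "0 \<le> flat_exp x" "flat_exp x \<le> 1"
  and flat_exp_mono: "0 < x \<Longrightarrow> x \<le> y \<Longrightarrow> flat_exp x \<le> flat_exp y"
  unfolding flat_exp_def by (auto simp: frac_le)

text \<open>Every derivative of \<^const>\<open>flat_exp\<close> has the form \<open>q (1/x) * flat_exp x\<close>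
  with a polynomial \<open>q\<close>; at \<open>x = 0\<close> the polynomial factor is beaten by \<open>exp (-1/x)\<close>.\<close>

lemma has_derivative_polynomial_inverse_flat_exp_at_0:
  assumes q: "real_polynomial_function q"
  shows "((\<lambda>x. q (1 / x) * flat_exp x) has_real_derivative 0) (at 0)"
proof -
  let ?u = "\<lambda>x. q (1 / x) * flat_exp x"
  have "((\<lambda>t. (t * q t) * exp (- t)) \<longlongrightarrow> 0) at_top"
    by (intro polynomial_times_exp_neg_tendsto_0 real_polynomial_function.intros q)
      (simp add: real_polynomial_function_eq)
  from filterlim_compose[OF this filterlim_inverse_at_top_right]
  have "((\<lambda>y. (?u y - ?u 0) / (y - 0)) \<longlongrightarrow> 0) (at_right 0)"
    by (rule tendsto_cong[THEN iffD1, rotated])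
      (auto simp: eventually_at_right_field flat_exp_def divide_inverse intro!: exI[of _ 1])
  moreover have "((\<lambda>y. (?u y - ?u 0) / (y - 0)) \<longlongrightarrow> 0) (at_left 0)"
    by (rule tendsto_eventually)
      (auto simp: eventually_at_left_field flat_exp_def intro!: exI[of _ "-1"])
  ultimately show ?thesis
    by (simp add: has_field_derivative_iff filterlim_at_split)
qed

lemma has_derivative_polynomial_inverse_flat_exp:
  assumes q: "real_polynomial_function q"
  obtains q' where "real_polynomial_function q'"
    "\<And>x. ((\<lambda>x. q (1 / x) * flat_exp x) has_real_derivative q' (1 / x) * flat_exp x) (at x)"
proof -
  obtain dq where dq: "real_polynomial_function dq" "\<And>x. (q has_real_derivative dq x) (at x)"
    using has_real_derivative_polynomial_function[OF q] by auto
  define q' where "q' t = t * t * (q t - dq t)" for t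
  have "real_polynomial_function q'"
    unfolding q'_def
    by (intro real_polynomial_function.intros(4) real_polynomial_function_diff q dq(1))
      (simp_all add: real_polynomial_function_eq)
  moreover have "((\<lambda>x. q (1 / x) * flat_exp x) has_real_derivative q' (1 / x) * flat_exp x) (at x)"
    for x
  proof (cases x "0 :: real" rule: linorder_cases)
    case greater
    have "((\<lambda>x. 1 / x) has_real_derivative - (1 / (x * x))) (at x)"
      using greater by (auto intro!: derivative_eq_intros simp: power2_eq_square)
    from DERIV_chain2[OF dq(2) this]
    have "((\<lambda>x. q (1 / x) * exp (- 1 / x)) has_real_derivative q' (1 / x) * exp (- 1 / x)) (at x)"
      using greater by (auto intro!: derivative_eq_intros simp: q'_def field_simps power2_eq_square)
    then show ?thesis
      using greater by (auto simp: flat_exp_def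
          intro: has_field_derivative_transform_within_open[where S = "{0<..}"])
  next
    case less
    then show ?thesis
      by (auto simp: flat_exp_def intro: has_field_derivative_transform_within_open
          [where f = "\<lambda>_. 0" and S = "{..<0}"])
  next
    case equal
    then show ?thesis
      using has_derivative_polynomial_inverse_flat_exp_at_0[OF q] by (simp add: flat_exp_def)
  qed
  ultimately show ?thesis
    using that by blast
qed

lemma smooth_flat_exp: "smooth flat_exp"
proof (rule smoothI_deriv_closed
    [where S = "{\<lambda>x. q (1 / x) * flat_exp x | q. real_polynomial_function q}"])
  show "flat_exp \<in> {\<lambda>x. q (1 / x) * flat_exp x | q. real_polynomial_function q}"
    by (auto intro!: exI[of _ "\<lambda>_. 1"])
next
  fix u assume "u \<in> {\<lambda>x. q (1 / x) * flat_exp x | q. real_polynomial_function q}"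
  then obtain q where "real_polynomial_function q" "u = (\<lambda>x. q (1 / x) * flat_exp x)"
    by blast
  then obtain q' where "real_polynomial_function q'"
    "\<And>x. (u has_real_derivative q' (1 / x) * flat_exp x) (at x)"
    using has_derivative_polynomial_inverse_flat_exp by metis
  then show "\<exists>u'\<in>{\<lambda>x. q (1 / x) * flat_exp x | q. real_polynomial_function q}.
      \<forall>x. (u has_real_derivative u' x) (at x)"
    by (intro bexI[of _ "\<lambda>x. q' (1 / x) * flat_exp x"]) auto
qed

definition bump :: "real \<Rightarrow> real \<Rightarrow> real \<Rightarrow> real" where
  "bump a b x = flat_exp (x - a) * flat_exp (b - x)"

lemma smooth_bump: "smooth (bump a b)"
proof -
  have "smooth (\<lambda>x. flat_exp (1 * x + - a) * flat_exp ((- 1) * x + b))"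
    by (intro smooth_mult smooth_affine_comp smooth_flat_exp)
  then show ?thesis
    by (simp add: bump_def[abs_def])
qed

lemma bump_eq_0: "x \<notin> {a<..<b} \<Longrightarrow> bump a b x = 0"
  and bump_pos: "x \<in> {a<..<b} \<Longrightarrow> 0 < bump a b x"
  and bump_bounds: "0 \<le> bump a b x" "bump a b x \<le> 1"
  unfolding bump_def
  by (auto simp: flat_exp_eq_0 flat_exp_pos flat_exp_bounds mult_le_one)

section \<open>Integrals against compactly supported functions\<close>

lemma integrable_continuous_compact_support:
  fixes u :: "real \<Rightarrow> real"
  assumes "continuous_on UNIV u" "\<And>x. x \<notin> {a..b} \<Longrightarrow> u x = 0"
  shows "integrable lborel u"
proof -
  have "set_integrable lborel {a..b} u"
    using assms(1) by (intro borel_integrable_atLeastAtMost') (auto intro: continuous_on_subset)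
  moreover have "(\<lambda>x. indicator {a..b} x *\<^sub>R u x) = u"
    using assms(2) by (intro ext) (auto simp: indicator_def)
  ultimately show ?thesis
    unfolding set_integrable_def by simp
qed

lemma integrable_continuous_mult_compact_support:
  fixes k g :: "real \<Rightarrow> real"
  assumes k: "integrable lborel k" "\<And>x. x \<notin> {a..b} \<Longrightarrow> k x = 0"
    and g: "continuous_on UNIV g"
  shows "integrable lborel (\<lambda>y. g y * k y)"
proof -
  have "bounded (g ` {a..b})"
    using g by (intro compact_imp_bounded compact_continuous_image)
      (auto intro: continuous_on_subset)
  then obtain M where M: "\<And>x. x \<in> {a..b} \<Longrightarrow> \<bar>g x\<bar> \<le> M"
    unfolding bounded_iff by force
  have bound: "norm (g x * k x) \<le> norm (M * k x)" for x
  proof (cases "x \<in> {a..b}")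
    case True
    then have "\<bar>g x\<bar> \<le> \<bar>M\<bar>"
      using M by force
    then show ?thesis
      by (simp add: abs_mult mult_right_mono)
  qed (use k(2) in simp)
  have "(\<lambda>y. g y * k y) \<in> borel_measurable lborel"
    using k(1) borel_measurable_continuous_onI[OF g] by simp
  from Bochner_Integration.integrable_bound[OF _ this AE_I2[OF bound]]
  show ?thesis
    using k(1) by simp
qed

lemma integral_mult_diff_le:
  fixes k g p :: "real \<Rightarrow> real"
  assumes k: "integrable lborel k" "\<And>x. x \<notin> {a..b} \<Longrightarrow> k x = 0"
    and cont: "continuous_on UNIV g" "continuous_on UNIV p"
    and close: "\<And>x. x \<in> {a..b} \<Longrightarrow> \<bar>g x - p x\<bar> \<le> e"
  shows "\<bar>(LINT y|lborel. g y * k y) - (LINT y|lborel. p y * k y)\<bar> \<le> e * (LINT y|lborel. \<bar>k y\<bar>)"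
proof -
  have int: "integrable lborel (\<lambda>y. g y * k y)" "integrable lborel (\<lambda>y. p y * k y)"
    using integrable_continuous_mult_compact_support[of k a b] k cont by blast+
  have "\<bar>(LINT y|lborel. g y * k y) - (LINT y|lborel. p y * k y)\<bar> =
      \<bar>LINT y|lborel. (g y - p y) * k y\<bar>"
    using Bochner_Integration.integral_diff[OF int] by (simp add: left_diff_distrib)
  also have "\<dots> \<le> (LINT y|lborel. e * \<bar>k y\<bar>)"
  proof (rule integral_abs_bound_integral)
    show "integrable lborel (\<lambda>y. (g y - p y) * k y)"
      using Bochner_Integration.integrable_diff[OF int] by (simp add: left_diff_distrib)
    show "\<bar>(g y - p y) * k y\<bar> \<le> e * \<bar>k y\<bar>" for y
    proof (cases "y \<in> {a..b}")
      case True
      then show ?thesis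
        unfolding abs_mult using close by (intro mult_right_mono) simp_all
    qed (simp add: k(2))
  qed (use k in simp)
  finally show ?thesis
    by simp
qed

lemma integrable_mult_test_fun:
  assumes u: "\<And>a b. set_integrable lborel {a..b} u" and "test_fun \<phi>"
  shows "integrable lborel (\<lambda>x. u x * \<phi> x)"
proof -
  obtain R where "\<forall>x\<in>{x. \<phi> x \<noteq> 0}. norm x \<le> R"
    using \<open>test_fun \<phi>\<close> unfolding test_fun_def bounded_iff by blast
  then have R: "\<phi> x = 0" if "x \<notin> {-R..R}" for x
    using that by (auto simp: abs_le_iff)
  have "continuous_on UNIV \<phi>"
    using smooth_continuous_higher_deriv[of \<phi> 0] \<open>test_fun \<phi>\<close> by (simp add: test_fun_iff)
  then have "integrable lborel (\<lambda>x. \<phi> x * (indicator {-R..R} x *\<^sub>R u x))"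
    using u[of "-R" R] unfolding set_integrable_def
    by (intro integrable_continuous_mult_compact_support[of _ "-R" R]) auto
  also have "(\<lambda>x. \<phi> x * (indicator {-R..R} x *\<^sub>R u x)) = (\<lambda>x. u x * \<phi> x)"
    using R by (intro ext) (auto simp: indicator_def)
  finally show ?thesis .
qed

lemma integral_by_parts_compact_support:
  fixes u v u' v' :: "real \<Rightarrow> real"
  assumes du: "\<And>x. (u has_real_derivative u' x) (at x)"
    and dv: "\<And>x. (v has_real_derivative v' x) (at x)"
    and cont: "continuous_on UNIV u'" "continuous_on UNIV v'"
    and supp: "\<And>x. x \<notin> {a..b} \<Longrightarrow> u x = 0" "\<And>x. x \<notin> {a..b} \<Longrightarrow> u' x = 0"
    and "a \<le> b"
  shows "(LINT x|lborel. u x * v' x) = - (LINT x|lborel. u' x * v x)"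
proof -
  have "continuous_on UNIV u" "continuous_on UNIV v"
    using du dv by (meson DERIV_continuous continuous_at_imp_continuous_on)+
  then have cont_prods: "continuous_on UNIV (\<lambda>x. u x * v' x)" "continuous_on UNIV (\<lambda>x. u' x * v x)"
    using cont by (auto intro: continuous_on_mult)
  have int: "integrable lborel (\<lambda>x. u x * v' x)" "integrable lborel (\<lambda>x. u' x * v x)"
    using integrable_continuous_compact_support[OF cont_prods(1), of a b]
      integrable_continuous_compact_support[OF cont_prods(2), of a b] supp by simp_all
  have "(LINT x|lborel. indicator {a-1..b+1} x *\<^sub>R (u' x * v x + u x * v' x))
      = u (b+1) * v (b+1) - u (a-1) * v (a-1)"
  proof (rule integral_FTC_atLeastAtMost)
    show "((\<lambda>x. u x * v x) has_vector_derivative u' x * v x + u x * v' x) (at x within {a-1..b+1})"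
      for x
      using DERIV_mult[OF du dv, of x]
      by (simp add: has_real_derivative_iff_has_vector_derivative has_vector_derivative_at_within
          algebra_simps)
    show "continuous_on {a-1..b+1} (\<lambda>x. u' x * v x + u x * v' x)"
      using continuous_on_add[OF cont_prods(2,1)] by (rule continuous_on_subset) simp
  qed (use \<open>a \<le> b\<close> in simp)
  also have "\<dots> = 0"
    using supp(1)[of "b+1"] supp(1)[of "a-1"] by simp
  also have "(\<lambda>x. indicator {a-1..b+1} x *\<^sub>R (u' x * v x + u x * v' x)) =
      (\<lambda>x. u' x * v x + u x * v' x)"
  proof
    show "indicator {a-1..b+1} x *\<^sub>R (u' x * v x + u x * v' x) = u' x * v x + u x * v' x" for x
      using supp[of x] by (cases "x \<in> {a-1..b+1}") auto
  qed
  finally show ?thesis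
    using Bochner_Integration.integral_add[OF int(2) int(1)] by simp
qed

lemma integral_mult_higher_deriv_swap:
  fixes f \<phi> :: "real \<Rightarrow> real"
  assumes f: "smooth f" "\<And>x. x \<notin> {a<..<b} \<Longrightarrow> f x = 0" "a \<le> b" and "smooth \<phi>"
  shows "(LINT x|lborel. f x * (deriv ^^ k) \<phi> x) =
    (-1) ^ k * (LINT x|lborel. (deriv ^^ k) f x * \<phi> x)"
  using \<open>smooth \<phi>\<close>
proof (induction k arbitrary: \<phi>)
  case (Suc k)
  have "(LINT x|lborel. f x * (deriv ^^ Suc k) \<phi> x) =
      (LINT x|lborel. f x * (deriv ^^ k) (deriv \<phi>) x)"
    by (simp add: funpow_Suc_right del: funpow.simps)
  also have "\<dots> = (-1) ^ k * (LINT x|lborel. (deriv ^^ k) f x * deriv \<phi> x)"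
    using Suc smooth_deriv by blast
  also have "(LINT x|lborel. (deriv ^^ k) f x * deriv \<phi> x) =
      - (LINT x|lborel. (deriv ^^ Suc k) f x * \<phi> x)"
  proof (rule integral_by_parts_compact_support)
    show "((deriv ^^ k) f has_real_derivative (deriv ^^ Suc k) f x) (at x)" for x
      by (rule smooth_has_higher_deriv[OF f(1)])
    show "(\<phi> has_real_derivative deriv \<phi> x) (at x)" for x
      using smooth_has_higher_deriv[OF \<open>smooth \<phi>\<close>, of 0] by simp
    show "continuous_on UNIV ((deriv ^^ Suc k) f)"
      by (rule smooth_continuous_higher_deriv[OF f(1)])
    show "continuous_on UNIV (deriv \<phi>)"
      using smooth_continuous_higher_deriv[OF \<open>smooth \<phi>\<close>, of 1] by simp
    show "(deriv ^^ k) f x = 0" "(deriv ^^ Suc k) f x = 0" if "x \<notin> {a..b}" for x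
      using higher_deriv_eq_0_outside[where u = f, OF f(2) that] by blast+
  qed (rule f(3))
  finally show ?case by simp
qed simp

lemma weak_derivs_smooth_compact_support:
  fixes f :: "real \<Rightarrow> real"
  assumes "smooth f" "\<And>x. x \<notin> {a<..<b} \<Longrightarrow> f x = 0" "a \<le> b"
  shows "weak_derivs \<alpha> f (\<lambda>\<tau>. (deriv ^^ \<tau>) f)"
  unfolding weak_derivs_def test_fun_iff
  using integral_mult_higher_deriv_swap[OF assms] by simp

section \<open>Uniqueness of weak derivatives\<close>

lemma emeasure_density_positive_part_greaterThan:
  fixes h :: "real \<Rightarrow> real"
  assumes "integrable lborel h"
  shows "emeasure (density lborel (\<lambda>y. ennreal (max 0 (h y)))) {x<..}
      = ennreal (LINT y|lborel. indicator {x<..} y * max 0 (h y))"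
proof -
  have [measurable]: "h \<in> borel_measurable borel"
    using assms by simp
  have "emeasure (density lborel (\<lambda>y. ennreal (max 0 (h y)))) {x<..}
      = (\<integral>\<^sup>+ y. ennreal (indicator {x<..} y * max 0 (h y)) \<partial>lborel)"
    by (subst emeasure_density) (auto intro!: nn_integral_cong simp: indicator_def)
  also have "\<dots> = ennreal (LINT y|lborel. indicator {x<..} y * max 0 (h y))"
    using integrable_mult_indicator[of "{x<..}" lborel "\<lambda>y. max 0 (h y)"] assms
    by (intro nn_integral_eq_integral) auto
  finally show ?thesis .
qed

text \<open>The densities of the positive and negative parts of \<open>k\<close> agree on all half-lines,
  hence as measures.\<close>

lemma AE_eq_0_if_tail_integrals_eq_0:
  fixes k :: "real \<Rightarrow> real"
  assumes k: "integrable lborel k"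
    and tails: "\<And>x. (LINT y|lborel. indicator {x<..} y * k y) = 0"
  shows "AE y in lborel. k y = 0"
proof -
  have [measurable]: "k \<in> borel_measurable borel"
    using k by simp
  have k_neg: "integrable lborel (\<lambda>y. - k y)"
    using k by simp
  have "density lborel (\<lambda>y. ennreal (max 0 (k y))) = density lborel (\<lambda>y. ennreal (max 0 (- k y)))"
  proof (rule measure_eqI_lessThan)
    fix x
    have "(LINT y|lborel. indicator {x<..} y * max 0 (k y)) -
        (LINT y|lborel. indicator {x<..} y * max 0 (- k y))
        = (LINT y|lborel. indicator {x<..} y * max 0 (k y) - indicator {x<..} y * max 0 (- k y))"
      using integrable_mult_indicator[of "{x<..}" lborel "\<lambda>y. max 0 (k y)"]
        integrable_mult_indicator[of "{x<..}" lborel "\<lambda>y. max 0 (- k y)"] k k_neg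
      by (intro Bochner_Integration.integral_diff[symmetric]) simp_all
    also have "\<dots> = (LINT y|lborel. indicator {x<..} y * k y)"
      by (intro Bochner_Integration.integral_cong) (auto simp: indicator_def max_def)
    finally show "emeasure (density lborel (\<lambda>y. ennreal (max 0 (k y)))) {x<..} =
        emeasure (density lborel (\<lambda>y. ennreal (max 0 (- k y)))) {x<..}"
      using tails[of x] by (simp add: emeasure_density_positive_part_greaterThan[OF k]
          emeasure_density_positive_part_greaterThan[OF k_neg])
    show "emeasure (density lborel (\<lambda>y. ennreal (max 0 (k y)))) {x<..} < \<infinity>"
      by (simp add: emeasure_density_positive_part_greaterThan[OF k])
  qed auto
  then have "AE y in lborel. ennreal (max 0 (k y)) = ennreal (max 0 (- k y))"
    by (intro sigma_finite_measure.density_unique[OF sigma_finite_lborel]) auto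
  then show ?thesis
    by eventually_elim (auto simp: max_def split: if_splits)
qed

lemma ramp_tendsto_indicator_greaterThan:
  "(\<lambda>n. max 0 (min 1 (real (Suc n) * (y - x)))) \<longlonglongrightarrow> indicator {x<..} y"
proof (cases "x < y")
  case True
  obtain N :: nat where N: "1 / (y - x) < N"
    using reals_Archimedean2 by blast
  have "1 < real (Suc n) * (y - x)" if "N \<le> n" for n
  proof -
    have "1 / (y - x) < real (Suc n)"
      using N that by linarith
    then show ?thesis
      using True by (simp add: field_simps)
  qed
  then have "eventually (\<lambda>n. max 0 (min 1 (real (Suc n) * (y - x))) = 1) sequentially"
    unfolding eventually_sequentially by (intro exI[of _ N]) auto
  then show ?thesis
    using True by (simp add: tendsto_eventually)
next
  case False
  then have "min 1 (real (Suc n) * (y - x)) \<le> 0" for n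
    using mult_nonneg_nonpos[of "real (Suc n)" "y - x"] by linarith
  then show ?thesis
    using False by (simp add: max_absorb1)
qed

lemma tail_integral_eq_0_if_orthogonal_continuous:
  fixes k :: "real \<Rightarrow> real"
  assumes k: "integrable lborel k"
    and orth: "\<And>g. continuous_on UNIV g \<Longrightarrow> (LINT y|lborel. g y * k y) = 0"
  shows "(LINT y|lborel. indicator {x<..} y * k y) = 0"
proof -
  have [measurable]: "k \<in> borel_measurable borel"
    using k by simp
  define g where "g n y = max 0 (min 1 (real (Suc n) * (y - x)))" for n y
  have g_cont: "continuous_on UNIV (g n)" for n
    unfolding g_def by (intro continuous_intros)
  have [measurable]: "g n \<in> borel_measurable borel" for n
    by (rule borel_measurable_continuous_onI[OF g_cont])
  have "(\<lambda>n. LINT y|lborel. g n y * k y) \<longlonglongrightarrow> (LINT y|lborel. indicator {x<..} y * k y)"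
  proof (rule integral_dominated_convergence[where w = "\<lambda>y. \<bar>k y\<bar>"])
    show "AE y in lborel. (\<lambda>n. g n y * k y) \<longlonglongrightarrow> indicator {x<..} y * k y"
      unfolding g_def by (intro AE_I2 tendsto_mult_right ramp_tendsto_indicator_greaterThan)
    show "AE y in lborel. norm (g n y * k y) \<le> \<bar>k y\<bar>" for n
      by (intro AE_I2) (simp add: g_def abs_mult mult_left_le_one_le)
  qed (use k in simp_all)
  moreover have "(LINT y|lborel. g n y * k y) = 0" for n
    by (rule orth[OF g_cont])
  ultimately show ?thesis
    by (simp add: LIMSEQ_const_iff)
qed

lemma integral_continuous_eq_0_if_orthogonal_polynomials:
  fixes k g :: "real \<Rightarrow> real"
  assumes k: "integrable lborel k" "\<And>x. x \<notin> {a..b} \<Longrightarrow> k x = 0"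
    and orth: "\<And>p. real_polynomial_function p \<Longrightarrow> (LINT y|lborel. p y * k y) = 0"
    and g: "continuous_on UNIV g"
  shows "(LINT y|lborel. g y * k y) = 0"
proof -
  define L where "L = (LINT y|lborel. \<bar>k y\<bar>)"
  have "L \<ge> 0"
    unfolding L_def by simp
  have "\<bar>LINT y|lborel. g y * k y\<bar> \<le> e" if "e > 0" for e
  proof -
    have "continuous_on {a..b} g" "e / (L + 1) > 0"
      using g \<open>e > 0\<close> \<open>L \<ge> 0\<close> by (auto intro: continuous_on_subset)
    from Stone_Weierstrass_polynomial_function[OF compact_Icc this]
    obtain p where p: "polynomial_function p" "\<And>x. x \<in> {a..b} \<Longrightarrow> \<bar>g x - p x\<bar> < e / (L + 1)"
      by auto
    have p_real: "real_polynomial_function p" and p_cont: "continuous_on UNIV p"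
      using p(1) by (simp_all add: real_polynomial_function_eq continuous_on_polymonial_function)
    have "\<bar>LINT y|lborel. g y * k y\<bar> \<le> e / (L + 1) * L"
      using integral_mult_diff_le[OF k g p_cont, where e = "e / (L + 1)"] p(2) orth[OF p_real]
      by (simp add: L_def less_imp_le)
    also have "\<dots> \<le> e"
      using \<open>e > 0\<close> \<open>L \<ge> 0\<close> by (simp add: field_simps)
    finally show ?thesis .
  qed
  then have "\<bar>LINT y|lborel. g y * k y\<bar> \<le> 0"
    by (rule field_le_epsilon) simp
  then show ?thesis
    by simp
qed

lemma test_fun_bump_mult_polynomial:
  assumes "real_polynomial_function p"
  shows "test_fun (\<lambda>x. bump a b x * p x)"
proof -
  have "{x. bump a b x * p x \<noteq> 0} \<subseteq> {a..b}"
  proof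
    fix x assume "x \<in> {x. bump a b x * p x \<noteq> 0}"
    then have "x \<in> {a<..<b}"
      using bump_eq_0[of x a b] by auto
    then show "x \<in> {a..b}"
      by simp
  qed
  then have "bounded {x. bump a b x * p x \<noteq> 0}"
    by (rule bounded_subset[OF bounded_closed_interval])
  moreover have "smooth (\<lambda>x. bump a b x * p x)"
    using smooth_mult[OF smooth_bump smooth_polynomial[OF assms]] .
  ultimately show ?thesis
    by (simp add: test_fun_iff)
qed

lemma AE_eq_0_if_orthogonal_test_funs:
  fixes h :: "real \<Rightarrow> real"
  assumes [measurable]: "h \<in> borel_measurable borel"
    and loc: "\<And>a b. set_integrable lborel {a..b} h"
    and orth: "\<And>\<phi>. test_fun \<phi> \<Longrightarrow> (LINT x|lborel. h x * \<phi> x) = 0"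
  shows "AE x in lborel. h x = 0"
proof -
  have on_interval: "AE x in lborel. x \<in> {a<..<b} \<longrightarrow> h x = 0" for a b
  proof -
    define k where "k x = bump a b x * h x" for x
    have k_supp: "k x = 0" if "x \<notin> {a..b}" for x
      using bump_eq_0[of x a b] that by (auto simp: k_def)
    have "integrable lborel (\<lambda>x. bump a b x * (indicator {a..b} x *\<^sub>R h x))"
      using loc[of a b] smooth_continuous_higher_deriv[OF smooth_bump, of 0]
      unfolding set_integrable_def
      by (intro integrable_continuous_mult_compact_support[of _ a b]) auto
    also have "(\<lambda>x. bump a b x * (indicator {a..b} x *\<^sub>R h x)) = k"
      using k_supp by (intro ext) (auto simp: k_def indicator_def)
    finally have k_int: "integrable lborel k" .
    have poly_orth: "(LINT y|lborel. p y * k y) = 0" if "real_polynomial_function p" for p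
      using orth[OF test_fun_bump_mult_polynomial[OF that, of a b]] by (simp add: k_def ac_simps)
    have "(LINT y|lborel. g y * k y) = 0" if "continuous_on UNIV g" for g
      by (rule integral_continuous_eq_0_if_orthogonal_polynomials[OF k_int k_supp poly_orth that])
    then have "AE x in lborel. k x = 0"
      by (intro AE_eq_0_if_tail_integrals_eq_0[OF k_int]
          tail_integral_eq_0_if_orthogonal_continuous[OF k_int])
    then show ?thesis
    proof eventually_elim
      case (elim x)
      then show ?case
        using bump_pos[of x a b] by (auto simp: k_def)
    qed
  qed
  have "AE x in lborel. \<forall>n::nat. x \<in> {- real n<..<real n} \<longrightarrow> h x = 0"
    unfolding AE_all_countable using on_interval by blast
  then show ?thesis
  proof eventually_elim
    case (elim x)
    obtain n :: nat where "\<bar>x\<bar> < n"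
      using reals_Archimedean2 by blast
    then show ?case
      using elim[rule_format, of n] by (auto simp: abs_less_iff)
  qed
qed

lemma weak_derivs_AE_unique:
  assumes g: "weak_derivs \<alpha> f g" and g': "weak_derivs \<alpha> f g'" and "\<tau> \<le> \<alpha>"
    and [measurable]: "g \<tau> \<in> borel_measurable borel" "g' \<tau> \<in> borel_measurable borel"
    and loc: "\<And>a b. set_integrable lborel {a..b} (g \<tau>)" "\<And>a b. set_integrable lborel {a..b} (g' \<tau>)"
  shows "AE x in lborel. g \<tau> x = g' \<tau> x"
proof (cases "\<tau> = 0")
  case True
  then show ?thesis
    using g g' by (simp add: weak_derivs_def)
next
  case False
  have "AE x in lborel. g \<tau> x - g' \<tau> x = 0"
  proof (rule AE_eq_0_if_orthogonal_test_funs)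
    show "set_integrable lborel {a..b} (\<lambda>x. g \<tau> x - g' \<tau> x)" for a b
      using loc by simp
    fix \<phi> assume "test_fun \<phi>"
    have "\<tau> \<in> {1..\<alpha>}"
      using \<open>\<tau> \<le> \<alpha>\<close> False by simp
    then have "(-1) ^ \<tau> * (LINT x|lborel. g \<tau> x * \<phi> x) = (-1) ^ \<tau> * (LINT x|lborel. g' \<tau> x * \<phi> x)"
      using g g' \<open>test_fun \<phi>\<close> unfolding weak_derivs_def by (metis (no_types, lifting))
    moreover have "integrable lborel (\<lambda>x. g \<tau> x * \<phi> x)" "integrable lborel (\<lambda>x. g' \<tau> x * \<phi> x)"
      using loc \<open>test_fun \<phi>\<close> by (simp_all add: integrable_mult_test_fun)
    ultimately show "(LINT x|lborel. (g \<tau> x - g' \<tau> x) * \<phi> x) = 0"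
      by (simp add: left_diff_distrib)
  qed simp
  then show ?thesis
    by simp
qed

section \<open>The Gaussian weight and the norm of the Sobolev space\<close>

lemma gauss_rho_pos: "0 < gauss_rho x"
  unfolding gauss_rho_def by simp

lemma gauss_rho_le_1: "gauss_rho x \<le> 1"
proof -
  have "exp (- (x^2) / 2) \<le> 1" "1 \<le> sqrt (2 * pi)"
    using pi_gt3 by simp_all
  then have "exp (- (x^2) / 2) \<le> sqrt (2 * pi)"
    by linarith
  then show ?thesis
    unfolding gauss_rho_def by (subst divide_le_eq_1_pos) simp_all
qed

lemma gauss_rho_antimono: "\<bar>x\<bar> \<le> \<bar>y\<bar> \<Longrightarrow> gauss_rho y \<le> gauss_rho x"
  unfolding gauss_rho_def by (simp add: abs_le_square_iff divide_right_mono)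

lemma continuous_on_gauss_rho: "continuous_on UNIV gauss_rho"
  unfolding gauss_rho_def by (intro continuous_intros) auto

lemma L2rho_norm_sq_nonneg: "0 \<le> L2rho_norm_sq u"
  unfolding L2rho_norm_sq_def
  by (intro integral_nonneg_AE AE_I2 mult_nonneg_nonneg)
    (simp_all add: less_imp_le[OF gauss_rho_pos])

lemma L2rho_imp_set_integrable_Icc:
  assumes "L2rho u"
  shows "set_integrable lborel {a..b} u"
  unfolding set_integrable_def
proof (rule Bochner_Integration.integrable_bound)
  have [measurable]: "u \<in> borel_measurable borel"
    and u2: "integrable lborel (\<lambda>x. (u x)^2 * gauss_rho x)"
    using assms unfolding L2rho_def by simp_all
  define m where "m = gauss_rho (\<bar>a\<bar> + \<bar>b\<bar>)"
  have "m > 0"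
    unfolding m_def by (rule gauss_rho_pos)
  show "integrable lborel (\<lambda>x. indicator {a..b} x * (1 + (u x)^2 * gauss_rho x / m))"
  proof -
    have "integrable lborel (\<lambda>x. indicator {a..b} x * ((u x)^2 * gauss_rho x / m))"
      using integrable_mult_indicator[of "{a..b}" lborel "\<lambda>x. (u x)^2 * gauss_rho x / m"] u2 by simp
    moreover have "integrable lborel (indicator {a..b} :: real \<Rightarrow> real)"
      by (rule integrable_real_indicator) (simp_all add: emeasure_lborel_Icc_eq)
    ultimately show ?thesis
      by (simp add: distrib_left)
  qed
  show "(\<lambda>x. indicator {a..b} x *\<^sub>R u x) \<in> borel_measurable lborel"
    by simp
  have "\<bar>u x\<bar> \<le> 1 + (u x)^2 * gauss_rho x / m" if "x \<in> {a..b}" for x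
  proof -
    have "m \<le> gauss_rho x"
      unfolding m_def using that by (intro gauss_rho_antimono) auto
    then have "(u x)^2 \<le> (u x)^2 * gauss_rho x / m"
      using \<open>m > 0\<close> by (simp add: le_divide_eq mult_left_mono)
    moreover have "\<bar>u x\<bar> \<le> 1 + (u x)^2"
      using sum_squares_bound[of "\<bar>u x\<bar>" 1] by simp
    ultimately show ?thesis
      by linarith
  qed
  then show "AE x in lborel. norm (indicator {a..b} x *\<^sub>R u x) \<le>
      norm (indicator {a..b} x * (1 + (u x)^2 * gauss_rho x / m))"
    using \<open>m > 0\<close> gauss_rho_pos[THEN less_imp_le]
    by (intro AE_I2) (auto simp: indicator_def)
qed

lemma sob_norm_eq:
  assumes "weak_derivs \<alpha> f g" "\<forall>\<tau>\<le>\<alpha>. L2rho (g \<tau>)"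
  shows "sob_norm \<alpha> f = sqrt (\<Sum>\<tau>\<le>\<alpha>. L2rho_norm_sq (g \<tau>))"
proof -
  define G where "G = (SOME g. weak_derivs \<alpha> f g \<and> (\<forall>\<tau>\<le>\<alpha>. L2rho (g \<tau>)))"
  have G: "weak_derivs \<alpha> f G" "\<forall>\<tau>\<le>\<alpha>. L2rho (G \<tau>)"
    using someI[of "\<lambda>g. weak_derivs \<alpha> f g \<and> (\<forall>\<tau>\<le>\<alpha>. L2rho (g \<tau>))", OF conjI[OF assms]]
    unfolding G_def by blast+
  have "L2rho_norm_sq (G \<tau>) = L2rho_norm_sq (g \<tau>)" if "\<tau> \<le> \<alpha>" for \<tau>
  proof -
    have [measurable]: "G \<tau> \<in> borel_measurable borel" "g \<tau> \<in> borel_measurable borel"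
      using G(2) assms(2) that by (simp_all add: L2rho_def)
    have "AE x in lborel. G \<tau> x = g \<tau> x"
      using G(2) assms(2) that
      by (intro weak_derivs_AE_unique[OF G(1) assms(1) that])
        (simp_all add: L2rho_imp_set_integrable_Icc)
    then have "AE x in lborel. (G \<tau> x)^2 * gauss_rho x = (g \<tau> x)^2 * gauss_rho x"
      by eventually_elim simp
    moreover have [measurable]: "gauss_rho \<in> borel_measurable borel"
      by (rule borel_measurable_continuous_onI[OF continuous_on_gauss_rho])
    ultimately show ?thesis
      unfolding L2rho_norm_sq_def by (intro integral_cong_AE) simp_all
  qed
  then show ?thesis
    unfolding sob_norm_def Let_def G_def[symmetric] by simp
qed

lemma L2rho_continuous_compact_support:
  assumes "continuous_on UNIV u" "\<And>x. x \<notin> {a..b} \<Longrightarrow> u x = 0"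
  shows "L2rho u"
  unfolding L2rho_def
proof
  show "u \<in> borel_measurable borel"
    by (rule borel_measurable_continuous_onI[OF assms(1)])
  show "integrable lborel (\<lambda>x. (u x)^2 * gauss_rho x)"
    using assms continuous_on_gauss_rho
    by (intro integrable_continuous_compact_support[of _ a b]) (auto intro: continuous_intros)
qed

lemma L2rho_norm_sq_le:
  assumes "continuous_on UNIV u" "\<And>x. x \<notin> {a..b} \<Longrightarrow> u x = 0" "\<And>x. \<bar>u x\<bar> \<le> B" "a \<le> b"
  shows "L2rho_norm_sq u \<le> (b - a) * B^2"
proof -
  have "L2rho_norm_sq u \<le> (LINT x|lborel. indicator {a..b} x * B^2)"
    unfolding L2rho_norm_sq_def
  proof (rule integral_mono)
    show "integrable lborel (\<lambda>x. (u x)^2 * gauss_rho x)"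
      using L2rho_continuous_compact_support[OF assms(1,2)] by (simp add: L2rho_def)
    show "integrable lborel (\<lambda>x. indicator {a..b} x * B^2)"
      using integrable_real_indicator[of "{a..b}" lborel] by (simp add: emeasure_lborel_Icc_eq)
    show "(u x)^2 * gauss_rho x \<le> indicator {a..b} x * B^2" for x
    proof (cases "x \<in> {a..b}")
      case True
      have "(u x)^2 * gauss_rho x \<le> (u x)^2"
        using gauss_rho_le_1[of x] by (simp add: mult_left_le)
      also have "\<dots> \<le> B^2"
        using assms(3)[of x] by (metis abs_ge_zero power2_abs power_mono)
      finally show ?thesis
        using True by simp
    qed (simp add: assms(2))
  qed
  then show ?thesis
    using assms(4) by (simp add: mult.commute)
qed

lemma integral_ge_of_lower_bound_on_Icc:
  fixes u :: "real \<Rightarrow> real"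
  assumes "integrable lborel u" "\<And>x. 0 \<le> u x" "\<And>x. x \<in> {a..b} \<Longrightarrow> c \<le> u x" "a \<le> b" "0 \<le> c"
  shows "c * (b - a) \<le> (LINT x|lborel. u x)"
proof -
  have "(LINT x|lborel. indicator {a..b} x * c) \<le> (LINT x|lborel. u x)"
  proof (rule integral_mono[OF _ assms(1)])
    show "integrable lborel (\<lambda>x. indicator {a..b} x * c)"
      using integrable_real_indicator[of "{a..b}" lborel] by (simp add: emeasure_lborel_Icc_eq)
    show "indicator {a..b} x * c \<le> u x" for x
      using assms(2,3)[of x] by (cases "x \<in> {a..b}") auto
  qed
  then show ?thesis
    using assms(4) by (simp add: mult.commute)
qed

lemma wce_ge:
  assumes "sobH \<alpha> f" "f \<noteq> (\<lambda>_. 0)"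
  shows "ereal (\<bar>gauss_int f - quad n w \<xi> f\<bar> / sob_norm \<alpha> f) \<le> wce \<alpha> n w \<xi>"
  unfolding wce_def using assms by (intro SUP_upper) simp

section \<open>The rescaled bump\<close>

definition scaled_bump :: "real \<Rightarrow> real \<Rightarrow> real" where
  "scaled_bump \<delta> x = bump 0 1 (x / \<delta>)"

lemma scaled_bump_affine: "scaled_bump \<delta> = (\<lambda>x. bump 0 1 ((1 / \<delta>) * x + 0))"
  unfolding scaled_bump_def by auto

lemma smooth_scaled_bump: "smooth (scaled_bump \<delta>)"
  unfolding scaled_bump_affine by (intro smooth_affine_comp smooth_bump)

lemma higher_deriv_scaled_bump:
  "(deriv ^^ k) (scaled_bump \<delta>) x = (1 / \<delta>) ^ k * (deriv ^^ k) (bump 0 1) (x / \<delta>)"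
  unfolding scaled_bump_affine higher_deriv_affine_comp[OF smooth_bump] by simp

lemma scaled_bump_eq_0: "0 < \<delta> \<Longrightarrow> x \<notin> {0<..<\<delta>} \<Longrightarrow> scaled_bump \<delta> x = 0"
  unfolding scaled_bump_def by (intro bump_eq_0) (auto simp: field_simps)

lemma scaled_bump_nonneg: "0 \<le> scaled_bump \<delta> x"
  unfolding scaled_bump_def by (rule bump_bounds)

lemma scaled_bump_ge:
  assumes "0 < \<delta>" "x \<in> {\<delta>/4..3*\<delta>/4}"
  shows "flat_exp (1/4) ^ 2 \<le> scaled_bump \<delta> x"
proof -
  have "1/4 \<le> x / \<delta>" "x / \<delta> \<le> 3/4"
    using assms by (auto simp: field_simps)
  then have "flat_exp (1/4) \<le> flat_exp (x / \<delta> - 0)" "flat_exp (1/4) \<le> flat_exp (1 - x / \<delta>)"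
    by (auto intro: flat_exp_mono)
  then show ?thesis
    unfolding scaled_bump_def bump_def power2_eq_square
    by (intro mult_mono) (auto simp: flat_exp_bounds)
qed

lemma weak_derivs_scaled_bump:
  assumes "0 < \<delta>"
  shows "weak_derivs \<alpha> (scaled_bump \<delta>) (\<lambda>\<tau>. (deriv ^^ \<tau>) (scaled_bump \<delta>))"
  using assms
  by (intro weak_derivs_smooth_compact_support[of _ 0 \<delta>] smooth_scaled_bump scaled_bump_eq_0) auto

lemma higher_deriv_scaled_bump_eq_0: "0 < \<delta> \<Longrightarrow> x \<notin> {0..\<delta>} \<Longrightarrow> (deriv ^^ k) (scaled_bump \<delta>) x = 0"
  by (rule higher_deriv_eq_0_outside[of 0 \<delta>]) (auto intro: scaled_bump_eq_0)

lemma L2rho_higher_deriv_scaled_bump: "0 < \<delta> \<Longrightarrow> L2rho ((deriv ^^ k) (scaled_bump \<delta>))"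
  by (intro L2rho_continuous_compact_support[of _ 0 \<delta>] smooth_continuous_higher_deriv
      smooth_scaled_bump higher_deriv_scaled_bump_eq_0)

lemma sobH_scaled_bump: "0 < \<delta> \<Longrightarrow> sobH \<alpha> (scaled_bump \<delta>)"
  unfolding sobH_def using smooth_continuous_higher_deriv[OF smooth_scaled_bump, of 0]
  by (auto intro!: exI weak_derivs_scaled_bump L2rho_higher_deriv_scaled_bump)

lemma sob_norm_scaled_bump:
  "0 < \<delta> \<Longrightarrow> sob_norm \<alpha> (scaled_bump \<delta>) =
     sqrt (\<Sum>\<tau>\<le>\<alpha>. L2rho_norm_sq ((deriv ^^ \<tau>) (scaled_bump \<delta>)))"
  by (intro sob_norm_eq weak_derivs_scaled_bump allI impI L2rho_higher_deriv_scaled_bump)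

lemma gauss_int_scaled_bump_ge:
  assumes "0 < \<delta>" "\<delta> \<le> 1"
  shows "flat_exp (1/4) ^ 2 * gauss_rho 1 * (\<delta> / 2) \<le> gauss_int (scaled_bump \<delta>)"
proof -
  have "flat_exp (1/4) ^ 2 * gauss_rho 1 * (3*\<delta>/4 - \<delta>/4) \<le>
      (LINT x|lborel. scaled_bump \<delta> x * gauss_rho x)"
  proof (rule integral_ge_of_lower_bound_on_Icc)
    show "integrable lborel (\<lambda>x. scaled_bump \<delta> x * gauss_rho x)"
      using smooth_continuous_higher_deriv[OF smooth_scaled_bump, of 0] continuous_on_gauss_rho
        assms
      by (intro integrable_continuous_compact_support[of _ 0 \<delta>])
        (auto intro: continuous_on_mult scaled_bump_eq_0)
    show "0 \<le> scaled_bump \<delta> x * gauss_rho x" for x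
      using scaled_bump_nonneg gauss_rho_pos[THEN less_imp_le] by (rule mult_nonneg_nonneg)
    show "flat_exp (1/4) ^ 2 * gauss_rho 1 \<le> scaled_bump \<delta> x * gauss_rho x"
      if "x \<in> {\<delta>/4..3*\<delta>/4}" for x
      using scaled_bump_ge[OF assms(1) that] gauss_rho_antimono[of x 1] that assms
        gauss_rho_pos[THEN less_imp_le] scaled_bump_nonneg by (intro mult_mono) auto
  qed (use assms gauss_rho_pos[THEN less_imp_le] in auto)
  then show ?thesis
    unfolding gauss_int_def by simp
qed

lemma sob_norm_scaled_bump_pos:
  assumes "0 < \<delta>" "\<delta> \<le> 1"
  shows "0 < sob_norm \<alpha> (scaled_bump \<delta>)"
proof -
  have "(flat_exp (1/4) ^ 2) ^ 2 * gauss_rho 1 * (3*\<delta>/4 - \<delta>/4) \<le> L2rho_norm_sq (scaled_bump \<delta>)"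
    unfolding L2rho_norm_sq_def
  proof (rule integral_ge_of_lower_bound_on_Icc)
    show "integrable lborel (\<lambda>x. (scaled_bump \<delta> x)^2 * gauss_rho x)"
      using L2rho_higher_deriv_scaled_bump[OF assms(1), of 0] by (simp add: L2rho_def)
    show "0 \<le> (scaled_bump \<delta> x)^2 * gauss_rho x" for x
      using gauss_rho_pos[THEN less_imp_le] by simp
    show "(flat_exp (1/4) ^ 2) ^ 2 * gauss_rho 1 \<le> (scaled_bump \<delta> x)^2 * gauss_rho x"
      if "x \<in> {\<delta>/4..3*\<delta>/4}" for x
      using scaled_bump_ge[OF assms(1) that] gauss_rho_antimono[of x 1] that assms
        gauss_rho_pos[THEN less_imp_le]
      by (intro mult_mono power_mono) (auto simp: flat_exp_bounds)
  qed (use assms gauss_rho_pos[THEN less_imp_le] in auto)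
  moreover have "0 < (flat_exp (1/4) ^ 2) ^ 2 * gauss_rho 1 * (3*\<delta>/4 - \<delta>/4)"
    using assms flat_exp_pos[of "1/4"] gauss_rho_pos[of 1] by simp
  moreover have "L2rho_norm_sq (scaled_bump \<delta>) \<le>
      (\<Sum>\<tau>\<le>\<alpha>. L2rho_norm_sq ((deriv ^^ \<tau>) (scaled_bump \<delta>)))"
    using member_le_sum[of 0 "{..\<alpha>}" "\<lambda>\<tau>. L2rho_norm_sq ((deriv ^^ \<tau>) (scaled_bump \<delta>))"]
    by (simp add: L2rho_norm_sq_nonneg)
  ultimately show ?thesis
    using sob_norm_scaled_bump[OF assms(1)] by simp
qed

lemma sob_norm_scaled_bump_le:
  assumes "0 < \<delta>" "\<delta> \<le> 1" and B: "\<And>\<tau> x. \<tau> \<le> \<alpha> \<Longrightarrow> \<bar>(deriv ^^ \<tau>) (bump 0 1) x\<bar> \<le> B"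
  shows "sob_norm \<alpha> (scaled_bump \<delta>) \<le> sqrt (real \<alpha> + 1) * B * sqrt \<delta> / \<delta> ^ \<alpha>"
proof -
  have "0 \<le> B"
    using B[of 0 0] by simp
  have "L2rho_norm_sq ((deriv ^^ \<tau>) (scaled_bump \<delta>)) \<le> \<delta> * (B / \<delta> ^ \<alpha>)^2" if "\<tau> \<le> \<alpha>" for \<tau>
  proof -
    have "\<bar>(deriv ^^ \<tau>) (scaled_bump \<delta>) x\<bar> \<le> B / \<delta> ^ \<alpha>" for x
    proof -
      have "(1 / \<delta>) ^ \<tau> \<le> (1 / \<delta>) ^ \<alpha>"
        using assms(1,2) that by (intro power_increasing) auto
      then have "(1 / \<delta>) ^ \<tau> * \<bar>(deriv ^^ \<tau>) (bump 0 1) (x / \<delta>)\<bar> \<le> (1 / \<delta>) ^ \<alpha> * B"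
        using B[OF that] assms(1) by (intro mult_mono) auto
      then show ?thesis
        using assms(1) by (simp add: higher_deriv_scaled_bump abs_mult power_one_over)
    qed
    from L2rho_norm_sq_le[where a = 0 and b = \<delta>,
        OF smooth_continuous_higher_deriv[OF smooth_scaled_bump]
        higher_deriv_scaled_bump_eq_0[OF assms(1)] this]
    show ?thesis
      using assms(1) by simp
  qed
  then have "(\<Sum>\<tau>\<le>\<alpha>. L2rho_norm_sq ((deriv ^^ \<tau>) (scaled_bump \<delta>))) \<le>
      (real \<alpha> + 1) * (\<delta> * (B / \<delta> ^ \<alpha>)^2)"
    using sum_mono[of "{..\<alpha>}" "\<lambda>\<tau>. L2rho_norm_sq ((deriv ^^ \<tau>) (scaled_bump \<delta>))"
        "\<lambda>_. \<delta> * (B / \<delta> ^ \<alpha>)^2"]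
    by (simp add: add.commute)
  then have "sob_norm \<alpha> (scaled_bump \<delta>) \<le> sqrt ((real \<alpha> + 1) * (\<delta> * (B / \<delta> ^ \<alpha>)^2))"
    unfolding sob_norm_scaled_bump[OF assms(1)] by (rule real_sqrt_le_mono)
  also have "\<dots> = sqrt (real \<alpha> + 1) * B * sqrt \<delta> / \<delta> ^ \<alpha>"
    using \<open>0 \<le> B\<close> assms(1) by (simp add: real_sqrt_mult)
  finally show ?thesis .
qed

lemma wce_ge_scaled_bump:
  assumes \<delta>: "0 < \<delta>" "\<delta> \<le> 1" and gap: "\<forall>j<n. \<xi> j \<notin> {0<..<\<delta>}"
  shows "ereal (gauss_int (scaled_bump \<delta>) / sob_norm \<alpha> (scaled_bump \<delta>)) \<le> wce \<alpha> n w \<xi>"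
proof -
  let ?f = "scaled_bump \<delta>"
  have quad: "quad n w \<xi> ?f = 0"
    unfolding quad_def using gap scaled_bump_eq_0[OF \<delta>(1)] by simp
  have "?f \<noteq> (\<lambda>_. 0)"
    using scaled_bump_ge[OF \<delta>(1), of "\<delta> / 2"] flat_exp_pos[of "1/4"] \<delta>(1) by force
  from wce_ge[OF sobH_scaled_bump[OF \<delta>(1)] this, of n w \<xi>]
  have "ereal (\<bar>gauss_int ?f\<bar> / sob_norm \<alpha> ?f) \<le> wce \<alpha> n w \<xi>"
    by (simp add: quad)
  moreover have "gauss_int ?f / sob_norm \<alpha> ?f \<le> \<bar>gauss_int ?f\<bar> / sob_norm \<alpha> ?f"
    using sob_norm_scaled_bump_pos[OF \<delta>, of \<alpha>] by (intro divide_right_mono) simp_all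
  ultimately show ?thesis
    by (meson ereal_less_eq(3) order_trans)
qed

lemma wce_ge_gap_power:
  obtains C where "C > 0"
    "\<And>n w \<xi> \<delta>. 0 < \<delta> \<Longrightarrow> \<delta> \<le> 1 \<Longrightarrow> \<forall>j<n. \<xi> j \<notin> {0<..<\<delta>} \<Longrightarrow>
       ereal (C * \<delta> powr (real \<alpha> + 1/2)) \<le> wce \<alpha> n w \<xi>"
proof -
  obtain B where B: "B > 0" "\<And>\<tau> x. \<tau> \<le> \<alpha> \<Longrightarrow> \<bar>(deriv ^^ \<tau>) (bump 0 1) x\<bar> \<le> B"
    using higher_derivs_bounded_compact_support[OF smooth_bump bump_eq_0] by metis
  define c where "c = flat_exp (1/4) ^ 2 * gauss_rho 1"
  have "c > 0"
    unfolding c_def using flat_exp_pos[of "1/4"] gauss_rho_pos[of 1] by simp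
  define C where "C = c / (2 * sqrt (real \<alpha> + 1) * B)"
  have "C * \<delta> powr (real \<alpha> + 1/2) \<le> gauss_int (scaled_bump \<delta>) / sob_norm \<alpha> (scaled_bump \<delta>)"
    if \<delta>: "0 < \<delta>" "\<delta> \<le> 1" for \<delta>
  proof -
    have "0 \<le> gauss_int (scaled_bump \<delta>)"
      using gauss_int_scaled_bump_ge[OF \<delta>] mult_pos_pos[OF \<open>c > 0\<close> \<delta>(1)]
      unfolding c_def[symmetric] by linarith
    have "\<delta> powr (real \<alpha> + 1/2) = \<delta> ^ \<alpha> * sqrt \<delta>" "\<delta> = sqrt \<delta> * sqrt \<delta>"
      using \<delta>(1) by (simp_all add: powr_add powr_realpow powr_half_sqrt)
    then have "C * \<delta> powr (real \<alpha> + 1/2) = c * (\<delta> / 2) / (sqrt (real \<alpha> + 1) * B * sqrt \<delta> / \<delta> ^ \<alpha>)"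
      unfolding C_def using \<delta>(1) B(1) by (simp add: field_simps)
    also have "\<dots> \<le> gauss_int (scaled_bump \<delta>) / sob_norm \<alpha> (scaled_bump \<delta>)"
      using gauss_int_scaled_bump_ge[OF \<delta>] \<open>0 \<le> gauss_int (scaled_bump \<delta>)\<close>
        sob_norm_scaled_bump_pos[OF \<delta>] sob_norm_scaled_bump_le[where \<alpha> = \<alpha>, OF \<delta> B(2)]
      by (intro frac_le) (simp_all add: c_def)
    finally show ?thesis .
  qed
  moreover have "C > 0"
    unfolding C_def using \<open>c > 0\<close> B(1) by simp
  ultimately show ?thesis
    using that wce_ge_scaled_bump by (meson ereal_less_eq(3) order_trans)
qed

theorem corollary3p3:
  fixes \<alpha> :: nat
  assumes "\<alpha> \<ge> 1"
  shows "\<exists>C>0.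
     (\<forall>n w \<xi> \<delta>. strict_mono_on {..<n} \<xi> \<and> 0 < \<delta> \<and> \<delta> \<le> 1 \<and>
        (\<forall>j<n. \<xi> j \<notin> {0<..<\<delta>})
        \<longrightarrow> wce \<alpha> n w \<xi> \<ge> ereal (C * \<delta> powr (real \<alpha> + 1/2)))
   \<and> (\<forall>n w \<xi> (r::real). n \<ge> 1 \<and> strict_mono_on {..<n} \<xi> \<and> 0 < r \<and>
        (\<forall>j<n. \<xi> j \<notin> {0<..<real n powr (-r)})
        \<longrightarrow> wce \<alpha> n w \<xi> \<ge> ereal (C * real n powr (- r * real \<alpha> - r / 2)))"
proof -
  obtain C where "C > 0" and gap:
    "\<And>n w \<xi> \<delta>. 0 < \<delta> \<Longrightarrow> \<delta> \<le> 1 \<Longrightarrow> \<forall>j<n. \<xi> j \<notin> {0<..<\<delta>} \<Longrightarrow>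
       ereal (C * \<delta> powr (real \<alpha> + 1/2)) \<le> wce \<alpha> n w \<xi>"
    using wce_ge_gap_power by blast
  have "ereal (C * real n powr (- r * real \<alpha> - r / 2)) \<le> wce \<alpha> n w \<xi>"
    if "n \<ge> 1" "0 < r" "\<forall>j<n. \<xi> j \<notin> {0<..<real n powr (-r)}" for n w \<xi> and r :: real
  proof -
    have "1 \<le> real n powr r"
      using that(1,2) by (intro ge_one_powr_ge_zero) auto
    then have "real n powr (-r) \<le> 1"
      by (simp add: powr_minus inverse_le_1_iff)
    moreover have "(real n powr (-r)) powr (real \<alpha> + 1/2) = real n powr (- r * real \<alpha> - r / 2)"
      by (simp add: powr_powr algebra_simps)
    ultimately show ?thesis
      using gap[of "real n powr (-r)" n \<xi> w] that by simp
  qed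
  then show ?thesis
    using \<open>C > 0\<close> gap by blast
qed

end
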